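(* Let $G$ be a connected cograph which is $k$-connected, and let $S$ be a minimal vertex separator of $G$ with $|S|=k$. Then every edge $\{u,v\}$ of $G\setminus S$ is universal to $S$, i.e. for every $s\in S$, $\{u,s\}\in E(G)$ or $\{v,s\}\in E(G)$.
   Context: A cograph is a graph that can be built from single vertices by repeatedly taking disjoint unions and joins; equivalently, a graph with no induced path on four vertices. $G\setminus S$ is the subgraph induced on $V(G)\setminus S$. A vertex separator of a connected graph $G$ is a set $S\subset V(G)$ such that $G\setminus S$ is disconnected; it is minimal if no proper subset of $S$ is a vertex separator; a minimum vertex separator is a minimal vertex separator of least size. The paper calls $G$ $k$-connected if there exists a minimum vertex separator of size $k$. *)

theory Defs
  imports Main
begin

text \<open>A graph is given by a vertex set V and an edge relation E (E x y means {x,y} is an edge).\<close>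

inductive cograph :: "'a set \<Rightarrow> ('a \<Rightarrow> 'a \<Rightarrow> bool) \<Rightarrow> bool" where
  single: "cograph {v} (\<lambda>x y. False)"
| union: "cograph V1 E1 \<Longrightarrow> cograph V2 E2 \<Longrightarrow> V1 \<inter> V2 = {} \<Longrightarrow>
           cograph (V1 \<union> V2) (\<lambda>x y. E1 x y \<or> E2 x y)"
| join: "cograph V1 E1 \<Longrightarrow> cograph V2 E2 \<Longrightarrow> V1 \<inter> V2 = {} \<Longrightarrow>
           cograph (V1 \<union> V2) (\<lambda>x y. E1 x y \<or> E2 x y \<or> (x \<in> V1 \<and> y \<in> V2) \<or> (x \<in> V2 \<and> y \<in> V1))"

definition connected_on :: "'a set \<Rightarrow> ('a \<Rightarrow> 'a \<Rightarrow> bool) \<Rightarrow> bool" where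
  "connected_on W E \<longleftrightarrow> W \<noteq> {} \<and>
     (\<forall>x\<in>W. \<forall>y\<in>W. (x, y) \<in> {(a, b). a \<in> W \<and> b \<in> W \<and> E a b}\<^sup>*)"

definition vertex_separator :: "'a set \<Rightarrow> ('a \<Rightarrow> 'a \<Rightarrow> bool) \<Rightarrow> 'a set \<Rightarrow> bool" where
  "vertex_separator V E S \<longleftrightarrow> S \<subset> V \<and> \<not> connected_on (V - S) E"

definition minimal_vertex_separator :: "'a set \<Rightarrow> ('a \<Rightarrow> 'a \<Rightarrow> bool) \<Rightarrow> 'a set \<Rightarrow> bool" where
  "minimal_vertex_separator V E S \<longleftrightarrow> vertex_separator V E S \<and>
     (\<forall>T. T \<subset> S \<longrightarrow> \<not> vertex_separator V E T)"

definition minimum_vertex_separator :: "'a set \<Rightarrow> ('a \<Rightarrow> 'a \<Rightarrow> bool) \<Rightarrow> 'a set \<Rightarrow> bool" where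
  "minimum_vertex_separator V E S \<longleftrightarrow> minimal_vertex_separator V E S \<and>
     (\<forall>T. minimal_vertex_separator V E T \<longrightarrow> card S \<le> card T)"

text \<open>The paper's notion: G is k-connected if there is a minimum vertex separator of size k.\<close>
definition k_connected :: "'a set \<Rightarrow> ('a \<Rightarrow> 'a \<Rightarrow> bool) \<Rightarrow> nat \<Rightarrow> bool" where
  "k_connected V E k \<longleftrightarrow> (\<exists>S. minimum_vertex_separator V E S \<and> card S = k)"

end

theory Submission
  imports Defs
begin

text \<open>Every vertex of a minimal separator S of a cograph is adjacent to every vertex
  outside S. Fix s \<in> S and a component C of G \ S. By minimality, G \ (S - {s}) is
  connected, so s has a neighbour in every component of G \ S, in particular one in C and
  one, z, in another component. If some vertex of C were not adjacent to s, walking inside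
  C from a neighbour of s to it would give an edge w' w with w' adjacent and w not adjacent
  to s, and z s w' w would be an induced P4. Hence s is adjacent to all of C.\<close>

definition induced_edges :: "'a set \<Rightarrow> ('a \<Rightarrow> 'a \<Rightarrow> bool) \<Rightarrow> ('a \<times> 'a) set" where
  "induced_edges W E = {(a, b). a \<in> W \<and> b \<in> W \<and> E a b}"

definition P4_free :: "('a \<Rightarrow> 'a \<Rightarrow> bool) \<Rightarrow> bool" where
  "P4_free E \<longleftrightarrow> (\<forall>a b c d. E a b \<and> E b c \<and> E c d \<longrightarrow> E a c \<or> E b d \<or> E a d)"

lemma connected_on_induced_edges:
  "connected_on W E \<longleftrightarrow> W \<noteq> {} \<and> (\<forall>x\<in>W. \<forall>y\<in>W. (x, y) \<in> (induced_edges W E)\<^sup>*)"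
  unfolding connected_on_def induced_edges_def ..

lemma sym_induced_edges: "symp E \<Longrightarrow> sym (induced_edges W E)"
  unfolding induced_edges_def sym_def symp_def by blast

lemma rtrancl_induced_edges_sym:
  "symp E \<Longrightarrow> (x, y) \<in> (induced_edges W E)\<^sup>* \<Longrightarrow> (y, x) \<in> (induced_edges W E)\<^sup>*"
  using sym_rtrancl[OF sym_induced_edges] by (meson symD)

lemma rtrancl_induced_edges_in:
  "(x, y) \<in> (induced_edges W E)\<^sup>* \<Longrightarrow> x \<in> W \<Longrightarrow> y \<in> W"
  by (induction rule: rtrancl_induct) (auto simp: induced_edges_def)

lemma connected_onI_reachable:
  assumes "symp E" "u \<in> W" "\<forall>z\<in>W. (u, z) \<in> (induced_edges W E)\<^sup>*"
  shows "connected_on W E"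
  unfolding connected_on_induced_edges
proof (intro conjI ballI)
  show "W \<noteq> {}"
    using \<open>u \<in> W\<close> by blast
  fix x y
  assume "x \<in> W" "y \<in> W"
  then have "(x, u) \<in> (induced_edges W E)\<^sup>*" "(u, y) \<in> (induced_edges W E)\<^sup>*"
    using assms(3) rtrancl_induced_edges_sym[OF \<open>symp E\<close>] by blast+
  then show "(x, y) \<in> (induced_edges W E)\<^sup>*"
    by (rule rtrancl_trans)
qed

lemma cograph_edge_in_vertices: "cograph V E \<Longrightarrow> E x y \<Longrightarrow> x \<in> V \<and> y \<in> V"
  by (induction arbitrary: x y rule: cograph.induct) auto

lemma cograph_symp: "cograph V E \<Longrightarrow> symp E"
  by (induction rule: cograph.induct) (auto simp: symp_def)

lemma cograph_P4_free: "cograph V E \<Longrightarrow> P4_free E"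
proof (induction rule: cograph.induct)
  case (single v)
  then show ?case by (simp add: P4_free_def)
next
  case (union V1 E1 V2 E2)
  note in_V1 = cograph_edge_in_vertices[OF union.hyps(1)]
    and in_V2 = cograph_edge_in_vertices[OF union.hyps(2)]
  show ?case unfolding P4_free_def
  proof (intro allI impI)
    fix a b c d
    assume "(E1 a b \<or> E2 a b) \<and> (E1 b c \<or> E2 b c) \<and> (E1 c d \<or> E2 c d)"
    then consider "E1 a b" "E1 b c" "E1 c d" | "E2 a b" "E2 b c" "E2 c d"
      using in_V1 in_V2 union.hyps(3) by blast
    then show "(E1 a c \<or> E2 a c) \<or> (E1 b d \<or> E2 b d) \<or> (E1 a d \<or> E2 a d)"
      using union.IH unfolding P4_free_def by metis
  qed
next
  case (join V1 E1 V2 E2)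
  note in_V1 = cograph_edge_in_vertices[OF join.hyps(1)]
    and in_V2 = cograph_edge_in_vertices[OF join.hyps(2)]
  let ?E = "\<lambda>x y. E1 x y \<or> E2 x y \<or> (x \<in> V1 \<and> y \<in> V2) \<or> (x \<in> V2 \<and> y \<in> V1)"
  show ?case unfolding P4_free_def
  proof (intro allI impI)
    fix a b c d
    assume path: "?E a b \<and> ?E b c \<and> ?E c d"
    show "?E a c \<or> ?E b d \<or> ?E a d"
    proof (rule ccontr)
      assume non_edges: "\<not> (?E a c \<or> ?E b d \<or> ?E a d)"
      have in_V: "a \<in> V1 \<union> V2" "b \<in> V1 \<union> V2" "c \<in> V1 \<union> V2" "d \<in> V1 \<union> V2"
        using path in_V1 in_V2 by blast+
      show False
      proof (cases "a \<in> V1")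
        case True
        then have "c \<in> V1" "d \<in> V1"
          using in_V non_edges by blast+
        then have "b \<in> V1"
          using in_V non_edges by blast
        then have "E1 a b \<and> E1 b c \<and> E1 c d \<and> \<not> E1 a c \<and> \<not> E1 b d \<and> \<not> E1 a d"
          using path non_edges \<open>a \<in> V1\<close> \<open>c \<in> V1\<close> \<open>d \<in> V1\<close> in_V2 join.hyps(3) by blast
        then show False
          using join.IH(1) unfolding P4_free_def by blast
      next
        case False
        then have "a \<in> V2"
          using in_V by blast
        then have "c \<in> V2" "d \<in> V2"
          using in_V non_edges by blast+
        then have "b \<in> V2"
          using in_V non_edges by blast
        then have "E2 a b \<and> E2 b c \<and> E2 c d \<and> \<not> E2 a c \<and> \<not> E2 b d \<and> \<not> E2 a d"
          using path non_edges \<open>a \<in> V2\<close> \<open>c \<in> V2\<close> \<open>d \<in> V2\<close> in_V1 join.hyps(3) by blast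
        then show False
          using join.IH(2) unfolding P4_free_def by blast
      qed
    qed
  qed
qed

lemma rtrancl_induced_edges_insert:
  assumes "(x, s) \<in> (induced_edges (insert s W) E)\<^sup>*" "x \<in> W" "s \<notin> W"
  shows "\<exists>z. (x, z) \<in> (induced_edges W E)\<^sup>* \<and> E z s"
proof (rule ccontr)
  assume no_neighbour: "\<nexists>z. (x, z) \<in> (induced_edges W E)\<^sup>* \<and> E z s"
  define C where "C = (induced_edges W E)\<^sup>* `` {x}"
  have "induced_edges (insert s W) E `` C \<subseteq> C"
  proof
    fix w'
    assume "w' \<in> induced_edges (insert s W) E `` C"
    then obtain w where w: "(x, w) \<in> (induced_edges W E)\<^sup>*" "(w, w') \<in> induced_edges (insert s W) E"
      unfolding C_def by auto
    have "w \<in> W"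
      using w(1) \<open>x \<in> W\<close> by (rule rtrancl_induced_edges_in)
    moreover have "w' \<noteq> s"
      using no_neighbour w unfolding induced_edges_def by blast
    ultimately have "(w, w') \<in> induced_edges W E"
      using w(2) unfolding induced_edges_def by blast
    with w(1) have "(x, w') \<in> (induced_edges W E)\<^sup>*"
      by (rule rtrancl_into_rtrancl)
    then show "w' \<in> C"
      unfolding C_def by blast
  qed
  then have "(induced_edges (insert s W) E)\<^sup>* `` C = C"
    by (rule Image_closed_trancl)
  moreover have "x \<in> C"
    unfolding C_def by blast
  ultimately have "s \<in> C"
    using assms(1) by blast
  then have "(x, s) \<in> (induced_edges W E)\<^sup>*"
    unfolding C_def by blast
  then have "s \<in> W"
    using assms(2) by (rule rtrancl_induced_edges_in)
  with assms(3) show False ..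
qed

lemma minimal_separator_neighbour_in_component:
  assumes "minimal_vertex_separator V E S" "s \<in> S" "x \<in> V - S"
  shows "\<exists>z. (x, z) \<in> (induced_edges (V - S) E)\<^sup>* \<and> E z s"
proof -
  have "S \<subset> V" and not_sep: "\<not> vertex_separator V E (S - {s})"
    using assms(1,2) unfolding minimal_vertex_separator_def vertex_separator_def by blast+
  then have "connected_on (V - (S - {s})) E"
    unfolding vertex_separator_def by blast
  moreover have "V - (S - {s}) = insert s (V - S)"
    using assms(2) \<open>S \<subset> V\<close> by blast
  ultimately have "connected_on (insert s (V - S)) E"
    by simp
  then have "(x, s) \<in> (induced_edges (insert s (V - S)) E)\<^sup>*"
    using assms(3) unfolding connected_on_induced_edges by simp
  moreover have "s \<notin> V - S"
    using assms(2) by blast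
  ultimately show ?thesis
    by (rule rtrancl_induced_edges_insert[OF _ assms(3)])
qed

lemma P4_free_adjacency_spreads:
  assumes "symp E" "P4_free E"
    and "(x, y) \<in> (induced_edges W E)\<^sup>*" "E x s"
    and "z \<in> W" "E z s" "(x, z) \<notin> (induced_edges W E)\<^sup>*"
  shows "E y s"
  using assms(3,4)
proof (induction rule: rtrancl_induct)
  case base
  then show ?case .
next
  case (step y y')
  have "y \<in> W" "y' \<in> W" "E y y'"
    using step.hyps(2) unfolding induced_edges_def by auto
  have "\<not> E z y"
  proof
    assume "E z y"
    then have "(y, z) \<in> induced_edges W E"
      using \<open>y \<in> W\<close> \<open>z \<in> W\<close> \<open>symp E\<close> unfolding induced_edges_def by (auto dest: sympD)
    then show False
      using step.hyps(1) assms(7) by (meson rtrancl_into_rtrancl)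
  qed
  moreover have "\<not> E z y'"
  proof
    assume "E z y'"
    then have "(y', z) \<in> induced_edges W E"
      using \<open>y' \<in> W\<close> \<open>z \<in> W\<close> \<open>symp E\<close> unfolding induced_edges_def by (auto dest: sympD)
    then show False
      using step.hyps(1,2) assms(7) by (meson rtrancl_into_rtrancl)
  qed
  moreover have "E s y"
    using step.IH step.prems \<open>symp E\<close> by (auto dest: sympD)
  ultimately show "E y' s"
    using \<open>P4_free E\<close> \<open>E z s\<close> \<open>E y y'\<close> \<open>symp E\<close>
    unfolding P4_free_def by (meson sympD)
qed

lemma cograph_minimal_separator_adjacent:
  assumes "cograph V E" "minimal_vertex_separator V E S" "u \<in> V - S" "s \<in> S"
  shows "E u s"
proof -
  let ?R = "induced_edges (V - S) E"
  have "symp E" "P4_free E"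
    using assms(1) by (rule cograph_symp, rule cograph_P4_free)
  obtain x where "(u, x) \<in> ?R\<^sup>*" "E x s"
    using minimal_separator_neighbour_in_component[OF assms(2,4,3)] by blast
  have "\<not> connected_on (V - S) E"
    using assms(2) unfolding minimal_vertex_separator_def vertex_separator_def by blast
  then obtain z0 where "z0 \<in> V - S" "(u, z0) \<notin> ?R\<^sup>*"
    using connected_onI_reachable[OF \<open>symp E\<close> assms(3)] by blast
  obtain z where "(z0, z) \<in> ?R\<^sup>*" "E z s"
    using minimal_separator_neighbour_in_component[OF assms(2,4) \<open>z0 \<in> V - S\<close>] by blast
  have "z \<in> V - S"
    using \<open>(z0, z) \<in> ?R\<^sup>*\<close> \<open>z0 \<in> V - S\<close> by (rule rtrancl_induced_edges_in)
  have "(x, z) \<notin> ?R\<^sup>*"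
    using \<open>(u, x) \<in> ?R\<^sup>*\<close> \<open>(z0, z) \<in> ?R\<^sup>*\<close> \<open>(u, z0) \<notin> ?R\<^sup>*\<close>
      rtrancl_induced_edges_sym[OF \<open>symp E\<close>] by (meson rtrancl_trans)
  moreover have "(x, u) \<in> ?R\<^sup>*"
    using rtrancl_induced_edges_sym[OF \<open>symp E\<close> \<open>(u, x) \<in> ?R\<^sup>*\<close>] .
  ultimately show ?thesis
    using P4_free_adjacency_spreads[OF \<open>symp E\<close> \<open>P4_free E\<close> _ \<open>E x s\<close> \<open>z \<in> V - S\<close> \<open>E z s\<close>]
    by blast
qed

theorem corollary1:
  fixes V :: "'a set" and E :: "'a \<Rightarrow> 'a \<Rightarrow> bool" and S :: "'a set" and k :: nat
  assumes "cograph V E"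
    and "connected_on V E"
    and "k_connected V E k"
    and "minimal_vertex_separator V E S"
    and "card S = k"
  shows "\<forall>u v. u \<in> V - S \<longrightarrow> v \<in> V - S \<longrightarrow> E u v \<longrightarrow> (\<forall>s\<in>S. E u s \<or> E v s)"
  using cograph_minimal_separator_adjacent[OF assms(1,4)] by blast

end
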